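(* Let $\mathcal{X},\mathcal{Y}$ be finite sets and $\mu\ge0$. The map $P_{XY}\mapsto R_\mu(P_{XY})$, defined on the set of probability distributions on $\mathcal{X}\times\mathcal{Y}$, is continuous.
   Context: For a distribution $P_{XY}$ on $\mathcal{X}\times\mathcal{Y}$, $\mathcal{R}^*_{\mathtt{WAK}}(P_{XY})$ is the set of pairs $(r_0,r_2)$ for which there exists a conditional distribution $P_{W|XY}$ with finite $\mathcal{W}$, $|\mathcal{W}|\le|\mathcal{X}||\mathcal{Y}|+2$, such that, for $(W,X,Y)\sim P_{XY}P_{W|XY}$, $r_0\ge I(W\wedge X,Y)$, $r_2\ge H(Y\mid W)$ and $I(W\wedge Y\mid X)=0$ (equivalently, $W$ may be taken to depend on $(X,Y)$ only through $X$, with $r_0\ge I(W\wedge X)$). For $\mu\ge0$, $R_\mu(P_{XY}):=\min\{r_0+\mu r_2:(r_0,r_2)\in\mathcal{R}^*_{\mathtt{WAK}}(P_{XY})\}$. Continuity is with respect to the $\ell_1$ (total variation) distance on distributions. *)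

theory Defs
  imports Complex_Main
begin

definition is_dist :: "('a::finite \<Rightarrow> real) \<Rightarrow> bool" where
  "is_dist P \<longleftrightarrow> (\<forall>a. 0 \<le> P a) \<and> (\<Sum>a\<in>UNIV. P a) = 1"

definition eta :: "real \<Rightarrow> real" where
  "eta t = (if t = 0 then 0 else - t * log 2 t)"

definition ent :: "'a set \<Rightarrow> ('a \<Rightarrow> real) \<Rightarrow> real" where
  "ent A p = (\<Sum>a\<in>A. eta (p a))"

text \<open>Auxiliary alphabet W = {0..<wak_card} with the cardinality bound |X||Y|+2.
  Any finite W with |W| \<le> |X||Y|+2 can be embedded in this set (unused letters
  get conditional probability 0).\<close>

definition wak_card :: "('x::finite \<times> 'y::finite) itself \<Rightarrow> nat" where
  "wak_card (t :: ('x \<times> 'y) itself) = card (UNIV :: 'x set) * card (UNIV :: 'y set) + 2"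

definition cond_dist :: "nat \<Rightarrow> (nat \<Rightarrow> 'x \<times> 'y \<Rightarrow> real) \<Rightarrow> bool" where
  "cond_dist K V \<longleftrightarrow> (\<forall>w xy. 0 \<le> V w xy) \<and> (\<forall>xy. (\<Sum>w<K. V w xy) = 1)"

definition jW :: "('x::finite \<times> 'y::finite \<Rightarrow> real) \<Rightarrow> (nat \<Rightarrow> 'x \<times> 'y \<Rightarrow> real) \<Rightarrow> nat \<Rightarrow> real" where
  "jW P V w = (\<Sum>xy\<in>UNIV. P xy * V w xy)"

definition jWX :: "('x::finite \<times> 'y::finite \<Rightarrow> real) \<Rightarrow> (nat \<Rightarrow> 'x \<times> 'y \<Rightarrow> real) \<Rightarrow> nat \<times> 'x \<Rightarrow> real" where
  "jWX P V wx = (\<Sum>y\<in>UNIV. P (snd wx, y) * V (fst wx) (snd wx, y))"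

definition jWY :: "('x::finite \<times> 'y::finite \<Rightarrow> real) \<Rightarrow> (nat \<Rightarrow> 'x \<times> 'y \<Rightarrow> real) \<Rightarrow> nat \<times> 'y \<Rightarrow> real" where
  "jWY P V wy = (\<Sum>x\<in>UNIV. P (x, snd wy) * V (fst wy) (x, snd wy))"

definition jWXY :: "('x::finite \<times> 'y::finite \<Rightarrow> real) \<Rightarrow> (nat \<Rightarrow> 'x \<times> 'y \<Rightarrow> real) \<Rightarrow> nat \<times> ('x \<times> 'y) \<Rightarrow> real" where
  "jWXY P V wxy = P (snd wxy) * V (fst wxy) (snd wxy)"

definition mX :: "('x::finite \<times> 'y::finite \<Rightarrow> real) \<Rightarrow> 'x \<Rightarrow> real" where
  "mX P x = (\<Sum>y\<in>UNIV. P (x, y))"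

definition H_W where "H_W K P V = ent {..<K} (jW P V)"
definition H_WX where "H_WX K P V = ent ({..<K} \<times> UNIV) (jWX P V)"
definition H_WY where "H_WY K P V = ent ({..<K} \<times> UNIV) (jWY P V)"
definition H_WXY where "H_WXY K P V = ent ({..<K} \<times> UNIV) (jWXY P V)"
definition H_XY where "H_XY (P :: 'x::finite \<times> 'y::finite \<Rightarrow> real) = ent UNIV P"
definition H_X where "H_X (P :: 'x::finite \<times> 'y::finite \<Rightarrow> real) = ent UNIV (mX P)"

definition MI_W_XY where "MI_W_XY K P V = H_W K P V + H_XY P - H_WXY K P V"

definition CH_Y_W where "CH_Y_W K P V = H_WY K P V - H_W K P V"

definition CMI_W_Y_X where "CMI_W_Y_X K P V = H_WX K P V + H_XY P - H_WXY K P V - H_X P"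

definition WAK_region :: "('x::finite \<times> 'y::finite \<Rightarrow> real) \<Rightarrow> (real \<times> real) set" where
  "WAK_region P = {(r0, r2). \<exists>V. cond_dist (wak_card TYPE('x \<times> 'y)) V \<and>
       r0 \<ge> MI_W_XY (wak_card TYPE('x \<times> 'y)) P V \<and>
       r2 \<ge> CH_Y_W (wak_card TYPE('x \<times> 'y)) P V \<and>
       CMI_W_Y_X (wak_card TYPE('x \<times> 'y)) P V = 0}"

text \<open>R_mu(P) = min {r0 + mu r2 : (r0,r2) in region}; the minimum is attained, written as Inf.\<close>
definition R_mu :: "real \<Rightarrow> ('x::finite \<times> 'y::finite \<Rightarrow> real) \<Rightarrow> real" where
  "R_mu mu P = Inf {r0 + mu * r2 | r0 r2. (r0, r2) \<in> WAK_region P}"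

end

theory Submission
  imports Defs "HOL-Analysis.Analysis" "HOL-Real_Asymp.Real_Asymp"
begin

(* A channel V from (X,Y) to W that reads only x satisfies I(W;Y|X) = 0.  Conversely, by Gibbs'
   inequality I(W;Y|X) = 0 forces the Markov chain W - X - Y, and then V can be replaced by the
   x-only channel P_{W|X} without changing the law of (W,X,Y), hence without changing the objective
   I(W;X,Y) + mu H(Y|W).  So R_mu(P) is the infimum of this objective over a set of channels that
   does not depend on P.  For a fixed channel the objective is a combination of entropies of linear
   images of P; since t log t is uniformly continuous on [0,1], these functions of P form an
   equicontinuous family, and the infimum of an equicontinuous family is continuous. *)

lemma eta_conv_ln: "eta t = - (t * ln t) / ln 2"
  by (simp add: eta_def log_def)

lemma eta_eq_log: "eta t = - t * log 2 t"
  by (simp add: eta_def)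

lemma continuous_on_eta: "continuous_on {0..1} eta"
  unfolding eta_conv_ln[abs_def]
proof (rule continuous_on_IccI)
  show "((\<lambda>t::real. - (t * ln t) / ln 2) \<longlongrightarrow> - (0 * ln 0) / ln 2) (at_right 0)"
    by simp real_asymp
  show "((\<lambda>t::real. - (t * ln t) / ln 2) \<longlongrightarrow> - (1 * ln 1) / ln 2) (at_left 1)"
    by simp real_asymp
next
  fix x :: real
  assume "0 < x"
  then show "(\<lambda>t. - (t * ln t) / ln 2) \<midarrow>x\<rightarrow> - (x * ln x) / ln 2"
    by (intro tendsto_intros) auto
qed simp

lemma eta_uniformly_continuous:
  fixes e :: real
  assumes "e > 0"
  obtains d where "d > 0"
    and "\<And>s t. s \<in> {0..1} \<Longrightarrow> t \<in> {0..1} \<Longrightarrow> \<bar>s - t\<bar> < d \<Longrightarrow> \<bar>eta s - eta t\<bar> < e"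
  using compact_uniformly_continuous[OF continuous_on_eta compact_Icc] assms
  unfolding uniformly_continuous_on_def dist_real_def by metis

lemma eta_bounds:
  assumes "0 \<le> t" "t \<le> 1"
  shows "0 \<le> eta t" "eta t \<le> 1 / ln 2"
proof -
  have "0 \<le> - (t * ln t) \<and> - (t * ln t) \<le> 1"
  proof (cases "t = 0")
    case False
    with assms have t: "0 < t" by simp
    have "ln (1 / t) \<le> 1 / t - 1"
      using t by (intro ln_le_minus_one) simp
    then have "t * - ln t \<le> t * (1 / t - 1)"
      using t by (intro mult_left_mono) (auto simp: ln_div)
    also have "\<dots> = 1 - t"
      using t by (simp add: field_simps)
    finally show ?thesis
      using t assms by (auto simp: mult_nonneg_nonpos)
  qed simp
  then show "0 \<le> eta t" "eta t \<le> 1 / ln 2"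
    using divide_nonneg_pos[of "- (t * ln t)" "ln 2"] divide_right_mono[of "- (t * ln t)" 1 "ln 2"]
    unfolding eta_conv_ln by simp_all
qed

lemma cond_dist_bounds:
  assumes "cond_dist K V" "w < K"
  shows "0 \<le> V w a \<and> V w a \<le> 1"
proof -
  have "0 \<le> V w' a" "(\<Sum>w'<K. V w' a) = 1" for w'
    using assms(1) unfolding cond_dist_def by blast+
  then show ?thesis
    using member_le_sum[of w "{..<K}" "\<lambda>w'. V w' a"] assms(2) by simp
qed

lemma sum_weighted_bounds:
  fixes P :: "'a::finite \<Rightarrow> real"
  assumes "is_dist P" and "\<And>a. 0 \<le> U a \<and> U a \<le> 1"
  shows "0 \<le> (\<Sum>a\<in>UNIV. P a * U a) \<and> (\<Sum>a\<in>UNIV. P a * U a) \<le> 1"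
proof -
  have P: "\<And>a. 0 \<le> P a" "sum P UNIV = 1"
    using assms(1) by (auto simp: is_dist_def)
  have "(\<Sum>a\<in>UNIV. P a * U a) \<le> sum P UNIV"
    using P assms(2) by (intro sum_mono) (simp add: mult_left_le)
  then show ?thesis
    using P assms(2) by (auto intro: sum_nonneg)
qed

lemma abs_sum_weighted_diff_le:
  fixes P P' :: "'a::finite \<Rightarrow> real"
  assumes "\<And>a. 0 \<le> U a \<and> U a \<le> 1"
  shows "\<bar>(\<Sum>a\<in>UNIV. P' a * U a) - (\<Sum>a\<in>UNIV. P a * U a)\<bar> \<le> (\<Sum>a\<in>UNIV. \<bar>P' a - P a\<bar>)"
proof -
  have "\<bar>(\<Sum>a\<in>UNIV. P' a * U a) - (\<Sum>a\<in>UNIV. P a * U a)\<bar> = \<bar>\<Sum>a\<in>UNIV. (P' a - P a) * U a\<bar>"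
    by (simp add: sum_subtractf left_diff_distrib)
  also have "\<dots> \<le> (\<Sum>a\<in>UNIV. \<bar>(P' a - P a) * U a\<bar>)"
    by (rule sum_abs)
  also have "\<dots> \<le> (\<Sum>a\<in>UNIV. \<bar>P' a - P a\<bar>)"
    using assms by (intro sum_mono) (simp add: abs_mult mult_left_le)
  finally show ?thesis .
qed

lemma ent_linear_image_bounds:
  fixes P :: "'a::finite \<Rightarrow> real"
  assumes "finite B" "is_dist P" "\<And>b a. b \<in> B \<Longrightarrow> 0 \<le> U b a \<and> U b a \<le> 1"
  shows "0 \<le> ent B (\<lambda>b. \<Sum>a\<in>UNIV. P a * U b a)"
    and "ent B (\<lambda>b. \<Sum>a\<in>UNIV. P a * U b a) \<le> card B / ln 2"
proof -
  have eta: "0 \<le> eta (\<Sum>a\<in>UNIV. P a * U b a) \<and> eta (\<Sum>a\<in>UNIV. P a * U b a) \<le> 1 / ln 2"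
    if "b \<in> B" for b
    using eta_bounds sum_weighted_bounds[where U="U b", OF assms(2) assms(3)[OF that]] by simp
  then show "0 \<le> ent B (\<lambda>b. \<Sum>a\<in>UNIV. P a * U b a)"
    unfolding ent_def by (simp add: sum_nonneg)
  have "ent B (\<lambda>b. \<Sum>a\<in>UNIV. P a * U b a) \<le> card B * (1 / ln 2)"
    unfolding ent_def using eta by (intro sum_bounded_above) simp
  then show "ent B (\<lambda>b. \<Sum>a\<in>UNIV. P a * U b a) \<le> card B / ln 2"
    by simp
qed

lemma ent_linear_image_close:
  fixes P P' :: "'a::finite \<Rightarrow> real" and d e :: real
  assumes "is_dist P" "is_dist P'" "\<And>b a. b \<in> B \<Longrightarrow> 0 \<le> U b a \<and> U b a \<le> 1"
    and "(\<Sum>a\<in>UNIV. \<bar>P' a - P a\<bar>) < d"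
    and "\<And>s t. s \<in> {0..1} \<Longrightarrow> t \<in> {0..1} \<Longrightarrow> \<bar>s - t\<bar> < d \<Longrightarrow> \<bar>eta s - eta t\<bar> < e"
  shows "\<bar>ent B (\<lambda>b. \<Sum>a\<in>UNIV. P' a * U b a) - ent B (\<lambda>b. \<Sum>a\<in>UNIV. P a * U b a)\<bar> \<le> real (card B) * e"
proof -
  have "\<bar>eta (\<Sum>a\<in>UNIV. P' a * U b a) - eta (\<Sum>a\<in>UNIV. P a * U b a)\<bar> \<le> e" if "b \<in> B" for b
    using sum_weighted_bounds[where U="U b", OF assms(1) assms(3)[OF that]]
      sum_weighted_bounds[where U="U b", OF assms(2) assms(3)[OF that]]
      abs_sum_weighted_diff_le[where U="U b" and P=P and P'=P', OF assms(3)[OF that]] assms(4)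
    by (intro less_imp_le assms(5)) auto
  then have "(\<Sum>b\<in>B. \<bar>eta (\<Sum>a\<in>UNIV. P' a * U b a) - eta (\<Sum>a\<in>UNIV. P a * U b a)\<bar>) \<le> card B * e"
    by (rule sum_bounded_above)
  then show ?thesis
    unfolding ent_def sum_subtractf[symmetric] by (rule order_trans[OF sum_abs])
qed

lemma sum_UNIV_prod:
  "(\<Sum>a\<in>UNIV. g a) = (\<Sum>x\<in>(UNIV::'x::finite set). \<Sum>y\<in>(UNIV::'y::finite set). g (x, y))"
  by (simp add: sum.cartesian_product UNIV_Times_UNIV)

lemma ent_Times:
  "finite A \<Longrightarrow> finite B \<Longrightarrow> ent (A \<times> B) p = (\<Sum>a\<in>A. \<Sum>b\<in>B. eta (p (a, b)))"
  by (simp add: ent_def sum.cartesian_product)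

lemma entropies_as_linear_images:
  fixes P :: "'x::finite \<times> 'y::finite \<Rightarrow> real"
  shows "H_W K P V = ent {..<K} (\<lambda>w. \<Sum>a\<in>UNIV. P a * V w a)"
    and "H_XY P = ent UNIV (\<lambda>b. \<Sum>a\<in>UNIV. P a * (if a = b then 1 else 0))"
    and "H_WXY K P V = ent ({..<K} \<times> UNIV)
           (\<lambda>wb. \<Sum>a\<in>UNIV. P a * (if a = snd wb then V (fst wb) a else 0))"
    and "H_WY K P V = ent ({..<K} \<times> UNIV)
           (\<lambda>wy. \<Sum>a\<in>UNIV. P a * (if snd a = snd wy then V (fst wy) a else 0))"
proof -
  show "H_W K P V = ent {..<K} (\<lambda>w. \<Sum>a\<in>UNIV. P a * V w a)"
    by (simp add: H_W_def jW_def[abs_def])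
  show "H_XY P = ent UNIV (\<lambda>b. \<Sum>a\<in>UNIV. P a * (if a = b then 1 else 0))"
    by (simp add: H_XY_def if_distrib cong: if_cong)
  show "H_WXY K P V = ent ({..<K} \<times> UNIV)
           (\<lambda>wb. \<Sum>a\<in>UNIV. P a * (if a = snd wb then V (fst wb) a else 0))"
    by (simp add: H_WXY_def jWXY_def[abs_def] if_distrib cong: if_cong)
  have "jWY P V = (\<lambda>wy. \<Sum>a\<in>UNIV. P a * (if snd a = snd wy then V (fst wy) a else 0))"
    by (simp add: fun_eq_iff jWY_def sum_UNIV_prod if_distrib cong: if_cong)
  then show "H_WY K P V = ent ({..<K} \<times> UNIV)
           (\<lambda>wy. \<Sum>a\<in>UNIV. P a * (if snd a = snd wy then V (fst wy) a else 0))"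
    by (simp add: H_WY_def)
qed

lemma sum_swap_outer:
  "(\<Sum>x\<in>A. \<Sum>y\<in>B. \<Sum>w\<in>C. f w x y) = (\<Sum>w\<in>C. \<Sum>x\<in>A. \<Sum>y\<in>B. f w x y)"
  by (subst sum.swap) (simp add: sum.swap[of _ B])

lemma sum3_nonneg_eq_0D:
  fixes f :: "'a \<Rightarrow> 'b \<Rightarrow> 'c \<Rightarrow> real"
  assumes "finite A" "finite B" "finite C" and "(\<Sum>a\<in>A. \<Sum>b\<in>B. \<Sum>c\<in>C. f a b c) = 0"
    and "\<And>a b c. a \<in> A \<Longrightarrow> b \<in> B \<Longrightarrow> c \<in> C \<Longrightarrow> 0 \<le> f a b c"
    and "a \<in> A" "b \<in> B" "c \<in> C"
  shows "f a b c = 0"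
  using assms by (simp add: sum_nonneg_eq_0_iff sum_nonneg)

lemma ln_ratio_lower_bound:
  fixes a q :: real
  assumes "0 \<le> a" "0 \<le> q" "0 < a \<Longrightarrow> 0 < q"
  shows "a - q \<le> a * (ln a - ln q)"
    and "a * (ln a - ln q) = a - q \<Longrightarrow> a = q"
proof -
  have "a - q \<le> a * (ln a - ln q) \<and> (a * (ln a - ln q) = a - q \<longrightarrow> a = q)"
  proof (cases "a = 0")
    case False
    with assms have a: "0 < a" and q: "0 < q" by auto
    have gap: "a * (ln a - ln q) - (a - q) = a * ((q / a - 1) - ln (q / a))"
      using a q by (simp add: ln_div field_simps)
    have "ln (q / a) \<le> q / a - 1"
      using a q by (intro ln_le_minus_one) simp
    then have "0 \<le> a * ((q / a - 1) - ln (q / a))"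
      using a by simp
    then have "a - q \<le> a * (ln a - ln q)"
      using gap by linarith
    moreover have "a = q" if "a * (ln a - ln q) = a - q"
    proof -
      have "ln (q / a) = q / a - 1"
        using that gap a by simp
      then have "q / a = 1"
        using a q by (intro ln_eq_minus_one) simp_all
      then show ?thesis
        using a by simp
    qed
    ultimately show ?thesis by blast
  qed (use assms in auto)
  then show "a - q \<le> a * (ln a - ln q)" "a * (ln a - ln q) = a - q \<Longrightarrow> a = q"
    by auto
qed

lemma CMI_W_Y_X_eq_sum_log:
  fixes P :: "'x::finite \<times> 'y::finite \<Rightarrow> real"
  assumes "cond_dist K V"
  shows "CMI_W_Y_X K P V = (\<Sum>w<K. \<Sum>x\<in>UNIV. \<Sum>y\<in>UNIV. jWXY P V (w, (x, y)) *
     (log 2 (jWXY P V (w, (x, y))) + log 2 (mX P x) - log 2 (jWX P V (w, x)) - log 2 (P (x, y))))"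
proof -
  have V: "(\<Sum>w<K. V w a) = 1" for a
    using assms unfolding cond_dist_def by blast
  let ?a = "\<lambda>w x y. jWXY P V (w, (x, y))"
  have "H_WXY K P V = (\<Sum>w<K. \<Sum>x\<in>UNIV. \<Sum>y\<in>UNIV. - (?a w x y * log 2 (?a w x y)))"
    unfolding H_WXY_def by (simp add: ent_Times sum_UNIV_prod eta_eq_log)
  moreover have "H_WX K P V = (\<Sum>w<K. \<Sum>x\<in>UNIV. \<Sum>y\<in>UNIV. - (?a w x y * log 2 (jWX P V (w, x))))"
    unfolding H_WX_def
    by (simp add: ent_Times eta_eq_log jWX_def jWXY_def sum_distrib_right sum_negf)
  moreover have "H_XY P = (\<Sum>w<K. \<Sum>x\<in>UNIV. \<Sum>y\<in>UNIV. - (?a w x y * log 2 (P (x, y))))"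
    unfolding H_XY_def ent_def
    by (subst sum_swap_outer[symmetric])
      (simp add: sum_UNIV_prod eta_eq_log jWXY_def sum_distrib_right[symmetric]
        sum_distrib_left[symmetric] V sum_negf)
  moreover have "H_X P = (\<Sum>w<K. \<Sum>x\<in>UNIV. \<Sum>y\<in>UNIV. - (?a w x y * log 2 (mX P x)))"
    unfolding H_X_def ent_def
    by (subst sum_swap_outer[symmetric])
      (simp add: eta_eq_log jWXY_def sum_distrib_right[symmetric] sum_distrib_left[symmetric] V
        sum_negf mX_def)
  ultimately show ?thesis
    unfolding CMI_W_Y_X_def
    by (simp add: distrib_left right_diff_distrib sum.distrib sum_subtractf sum_negf)
qed

(* P_WX(w,x) P_{Y|X}(y|x), the law of (W,X,Y) if W - X - Y were a Markov chain.  Where P_X(x) = 0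
   the division by zero yields 0, which is also the value of P_WXY there. *)
fun markov_joint ::
    "('x::finite \<times> 'y::finite \<Rightarrow> real) \<Rightarrow> (nat \<Rightarrow> 'x \<times> 'y \<Rightarrow> real) \<Rightarrow> nat \<times> 'x \<times> 'y \<Rightarrow> real"
  where "markov_joint P V (w, x, y) = jWX P V (w, x) * P (x, y) / mX P x"

definition markov_chain ::
    "nat \<Rightarrow> ('x::finite \<times> 'y::finite \<Rightarrow> real) \<Rightarrow> (nat \<Rightarrow> 'x \<times> 'y \<Rightarrow> real) \<Rightarrow> bool"
  where "markov_chain K P V \<longleftrightarrow> (\<forall>w<K. \<forall>a. jWXY P V (w, a) = markov_joint P V (w, a))"

definition x_only_channel :: "nat \<Rightarrow> (nat \<Rightarrow> 'x \<times> 'y \<Rightarrow> real) \<Rightarrow> bool"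
  where "x_only_channel K V \<longleftrightarrow> cond_dist K V \<and> (\<forall>w x y y'. V w (x, y) = V w (x, y'))"

lemma x_only_channel_const: "0 < K \<Longrightarrow> x_only_channel K (\<lambda>w a. if w = 0 then 1 else 0)"
  by (simp add: x_only_channel_def cond_dist_def)

context
  fixes P :: "'x::finite \<times> 'y::finite \<Rightarrow> real" and K :: nat and V :: "nat \<Rightarrow> 'x \<times> 'y \<Rightarrow> real"
  assumes P_nonneg: "\<forall>a. 0 \<le> P a" and V: "cond_dist K V"
begin

lemma joint_marginal_basics:
  shows "0 \<le> mX P x" and "P (x, y) \<le> mX P x" and "mX P x = 0 \<Longrightarrow> P (x, y) = 0"
    and "0 \<le> jWXY P V (w, (x, y))" and "0 \<le> jWX P V (w, x)"
    and "jWX P V (w, x) = (\<Sum>y\<in>UNIV. jWXY P V (w, (x, y)))"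
    and "w < K \<Longrightarrow> jWXY P V (w, (x, y)) \<le> P (x, y)"
    and "(\<Sum>w<K. jWX P V (w, x)) = mX P x"
proof -
  have P: "0 \<le> P a" and Vn: "0 \<le> V w a" and Vs: "(\<Sum>w<K. V w a) = 1" for a w
    using P_nonneg V unfolding cond_dist_def by blast+
  show "0 \<le> mX P x" and le: "P (x, y) \<le> mX P x"
    unfolding mX_def using P by (auto intro: sum_nonneg member_le_sum)
  then show "mX P x = 0 \<Longrightarrow> P (x, y) = 0"
    using P[of "(x, y)"] by simp
  show "0 \<le> jWXY P V (w, (x, y))" "0 \<le> jWX P V (w, x)"
    by (simp_all add: jWXY_def jWX_def P Vn sum_nonneg)
  show "jWX P V (w, x) = (\<Sum>y\<in>UNIV. jWXY P V (w, (x, y)))"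
    by (simp add: jWX_def jWXY_def)
  show "w < K \<Longrightarrow> jWXY P V (w, (x, y)) \<le> P (x, y)"
    using cond_dist_bounds[OF V] P[of "(x, y)"] by (simp add: jWXY_def mult_left_le)
  have "(\<Sum>w<K. jWX P V (w, x)) = (\<Sum>y\<in>UNIV. P (x, y) * (\<Sum>w<K. V w (x, y)))"
    unfolding jWX_def by (simp add: sum.swap[of _ "{..<K}"] sum_distrib_left)
  then show "(\<Sum>w<K. jWX P V (w, x)) = mX P x"
    by (simp add: Vs mX_def)
qed

lemma joint_marginals_pos:
  assumes "w < K" "0 < jWXY P V (w, (x, y))"
  shows "0 < P (x, y)" "0 < mX P x" "0 < jWX P V (w, x)"
proof -
  show "0 < P (x, y)"
    using joint_marginal_basics(7)[OF assms(1), of x y] assms(2) by linarith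
  then show "0 < mX P x"
    using joint_marginal_basics(2)[of x y] by linarith
  have "jWXY P V (w, (x, y)) \<le> jWX P V (w, x)"
    unfolding joint_marginal_basics(6) using joint_marginal_basics(4) by (intro member_le_sum) auto
  then show "0 < jWX P V (w, x)"
    using assms(2) by simp
qed

lemma CMI_W_Y_X_eq_relative_entropy:
  "CMI_W_Y_X K P V * ln 2 = (\<Sum>w<K. \<Sum>x\<in>UNIV. \<Sum>y\<in>UNIV.
     jWXY P V (w, (x, y)) * (ln (jWXY P V (w, (x, y))) - ln (markov_joint P V (w, (x, y)))))"
proof -
  have summand: "jWXY P V (w, (x, y)) * (log 2 (jWXY P V (w, (x, y))) + log 2 (mX P x)
      - log 2 (jWX P V (w, x)) - log 2 (P (x, y))) * ln 2
    = jWXY P V (w, (x, y)) * (ln (jWXY P V (w, (x, y))) - ln (markov_joint P V (w, (x, y))))"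
    if w: "w < K" for w x y
  proof (cases "jWXY P V (w, (x, y)) = 0")
    case False
    then have "0 < jWXY P V (w, (x, y))"
      using joint_marginal_basics(4) by (simp add: order_less_le)
    from joint_marginals_pos[OF w this]
    have ln_q: "ln (markov_joint P V (w, (x, y))) = ln (jWX P V (w, x)) + ln (P (x, y)) - ln (mX P x)"
      by (simp add: ln_div ln_mult)
    show ?thesis
      by (simp add: ln_q log_def field_simps del: markov_joint.simps)
  qed simp
  show ?thesis
    unfolding CMI_W_Y_X_eq_sum_log[OF V] sum_distrib_right
    by (intro sum.cong refl) (simp add: summand)
qed

lemma CMI_W_Y_X_eq_0_if_markov_chain:
  assumes "markov_chain K P V"
  shows "CMI_W_Y_X K P V = 0"
proof -
  have "CMI_W_Y_X K P V * ln 2 = 0"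
    using assms unfolding CMI_W_Y_X_eq_relative_entropy markov_chain_def by simp
  then show ?thesis
    by simp
qed

lemma markov_chain_if_CMI_W_Y_X_eq_0:
  assumes "CMI_W_Y_X K P V = 0"
  shows "markov_chain K P V"
proof -
  define a where "a w x y = jWXY P V (w, (x, y))" for w x y
  define q where "q w x y = markov_joint P V (w, (x, y))" for w x y
  have a_nonneg: "0 \<le> a w x y" and q_nonneg: "0 \<le> q w x y" for w x y
    unfolding a_def q_def using P_nonneg joint_marginal_basics(1,4,5) by simp_all
  have q_pos: "0 < q w x y" if "w < K" "0 < a w x y" for w x y
    using joint_marginals_pos[OF that[unfolded a_def]] unfolding q_def by simp
  have sum_q: "(\<Sum>y\<in>UNIV. q w x y) = (\<Sum>y\<in>UNIV. a w x y)" for w x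
  proof (cases "mX P x = 0")
    case True
    then show ?thesis
      by (simp add: a_def q_def jWXY_def joint_marginal_basics(3))
  next
    case False
    then show ?thesis
      unfolding a_def q_def joint_marginal_basics(6)[symmetric]
      by (simp add: sum_divide_distrib[symmetric] sum_distrib_left[symmetric] mX_def)
  qed
  \<comment> \<open>Each summand of the relative entropy dominates a - q, and the a - q sum to zero.\<close>
  define gap where "gap w x y = a w x y * (ln (a w x y) - ln (q w x y)) - (a w x y - q w x y)"
    for w x y
  have "(\<Sum>w<K. \<Sum>x\<in>UNIV. \<Sum>y\<in>UNIV. gap w x y) = 0"
    using assms sum_q CMI_W_Y_X_eq_relative_entropy unfolding gap_def a_def q_def
    by (simp add: sum_subtractf)
  then have "gap w x y = 0" if "w < K" for w x y
    using that ln_ratio_lower_bound(1) a_nonneg q_nonneg q_pos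
    by (intro sum3_nonneg_eq_0D[where f = gap]) (auto simp: gap_def diff_ge_0_iff_ge)
  then have "a w x y = q w x y" if "w < K" for w x y
    using that ln_ratio_lower_bound(2) a_nonneg q_nonneg q_pos by (simp add: gap_def)
  then show ?thesis
    unfolding markov_chain_def a_def q_def by auto
qed

lemma markov_chain_if_x_only_channel:
  assumes "x_only_channel K V"
  shows "markov_chain K P V"
proof -
  have x_only: "V w (x, y') = V w (x, y)" for w x y y'
    using assms unfolding x_only_channel_def by blast
  have jWX_eq: "jWX P V (w, x) = mX P x * V w (x, y)" for w x y
  proof -
    have "jWX P V (w, x) = (\<Sum>y'\<in>UNIV. P (x, y') * V w (x, y))"
      unfolding jWX_def by (intro sum.cong refl) (metis x_only fst_conv snd_conv)
    then show ?thesis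
      by (simp add: mX_def sum_distrib_right)
  qed
  show ?thesis
    unfolding markov_chain_def
  proof (intro allI impI)
    fix w and a :: "'x \<times> 'y"
    obtain x y where a: "a = (x, y)"
      by (cases a)
    show "jWXY P V (w, a) = markov_joint P V (w, a)"
    proof (cases "mX P x = 0")
      case True
      then show ?thesis
        by (simp add: a jWXY_def joint_marginal_basics(3))
    next
      case False
      then show ?thesis
        using jWX_eq[of w x y] by (simp add: a jWXY_def)
    qed
  qed
qed

lemma x_only_channel_of_markov_chain:
  assumes M: "markov_chain K P V" and K: "0 < K"
  obtains V' where "x_only_channel K V'"
    and "\<And>w a. w < K \<Longrightarrow> jWXY P V' (w, a) = jWXY P V (w, a)"
proof -
  \<comment> \<open>The conditional law of W given X, arbitrary on letters x with P_X(x) = 0.\<close>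
  define V' :: "nat \<Rightarrow> 'x \<times> 'y \<Rightarrow> real"
    where "V' w a = (if mX P (fst a) = 0 then (if w = 0 then 1 else 0)
                     else jWX P V (w, fst a) / mX P (fst a))" for w a
  have "(\<Sum>w<K. V' w a) = 1" for a
  proof (cases "mX P (fst a) = 0")
    case False
    then show ?thesis
      using joint_marginal_basics(8)[of "fst a"] by (simp add: V'_def sum_divide_distrib[symmetric])
  qed (use K in \<open>simp add: V'_def\<close>)
  then have "cond_dist K V'"
    unfolding cond_dist_def V'_def using joint_marginal_basics(1,5) by simp
  then have "x_only_channel K V'"
    unfolding x_only_channel_def by (simp add: V'_def)
  moreover have "jWXY P V' (w, (x, y)) = jWXY P V (w, (x, y))" if "w < K" for w x y
    using M that unfolding markov_chain_def
    by (auto simp: jWXY_def V'_def joint_marginal_basics(3) mult.commute)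
  ultimately show thesis
    using that by fastforce
qed

end

definition wak_objective ::
    "nat \<Rightarrow> real \<Rightarrow> ('x::finite \<times> 'y::finite \<Rightarrow> real) \<Rightarrow> (nat \<Rightarrow> 'x \<times> 'y \<Rightarrow> real) \<Rightarrow> real"
  where "wak_objective K mu P V = MI_W_XY K P V + mu * CH_Y_W K P V"

lemma wak_objective_cong:
  assumes "\<And>w a. w < K \<Longrightarrow> jWXY P V' (w, a) = jWXY P V (w, a)"
  shows "wak_objective K mu P V' = wak_objective K mu P V"
proof -
  have "jW P U w = (\<Sum>a\<in>UNIV. jWXY P U (w, a))" "jWY P U (w, y) = (\<Sum>x\<in>UNIV. jWXY P U (w, (x, y)))"
    for U w y by (simp_all add: jW_def jWY_def jWXY_def)
  then have "H_W K P V' = H_W K P V" "H_WY K P V' = H_WY K P V" "H_WXY K P V' = H_WXY K P V"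
    unfolding H_W_def H_WY_def H_WXY_def ent_def using assms by (auto intro!: sum.cong)
  then show ?thesis
    by (simp add: wak_objective_def MI_W_XY_def CH_Y_W_def)
qed

lemma bdd_below_wak_objective:
  fixes P :: "'x::finite \<times> 'y::finite \<Rightarrow> real"
  assumes P: "is_dist P" and mu: "0 \<le> mu"
  shows "bdd_below (wak_objective K mu P ` {V. cond_dist K V})"
proof (rule bdd_belowI)
  fix f assume "f \<in> wak_objective K mu P ` {V. cond_dist K V}"
  then obtain V where V: "cond_dist K V" and f: "f = wak_objective K mu P V"
    by blast
  note U = cond_dist_bounds[OF V]
  have W: "0 \<le> H_W K P V" "H_W K P V \<le> card {..<K} / ln 2"
    unfolding entropies_as_linear_images
    by (intro ent_linear_image_bounds P; simp add: U)+
  have XY: "0 \<le> H_XY P" and WY: "0 \<le> H_WY K P V"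
    unfolding entropies_as_linear_images
    by (intro ent_linear_image_bounds P; auto simp: U)+
  have WXY: "H_WXY K P V \<le> card ({..<K} \<times> (UNIV :: ('x \<times> 'y) set)) / ln 2"
    unfolding entropies_as_linear_images
    by (intro ent_linear_image_bounds P; auto simp: U)
  have "mu * H_W K P V \<le> mu * (card {..<K} / ln 2)"
    using W(2) mu by (rule mult_left_mono)
  moreover have "0 \<le> mu * H_WY K P V"
    using WY mu by simp
  ultimately show
    "- (card ({..<K} \<times> (UNIV :: ('x \<times> 'y) set)) / ln 2 + mu * (card {..<K} / ln 2)) \<le> f"
    unfolding f wak_objective_def MI_W_XY_def CH_Y_W_def
    using W XY WXY by (simp add: algebra_simps)
qed

lemma card_entropy_index_sets_le:
  "card {..<K} \<le> (K + 1) * CARD('x::finite) * CARD('y::finite)"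
  "card (UNIV :: ('x \<times> 'y) set) \<le> (K + 1) * CARD('x) * CARD('y)"
  "card ({..<K} \<times> (UNIV :: ('x \<times> 'y) set)) \<le> (K + 1) * CARD('x) * CARD('y)"
  "card ({..<K} \<times> (UNIV :: 'y set)) \<le> (K + 1) * CARD('x) * CARD('y)"
proof -
  have x: "1 \<le> CARD('x)" and "1 \<le> CARD('y)"
    by (simp_all add: Suc_le_eq)
  then have "K + 1 \<le> (K + 1) * (CARD('x) * CARD('y))"
    using mult_le_mono2[of 1 "CARD('x) * CARD('y)" "K + 1"] by simp
  then show "card {..<K} \<le> (K + 1) * CARD('x) * CARD('y)"
    unfolding mult.assoc by simp
  show "card (UNIV :: ('x \<times> 'y) set) \<le> (K + 1) * CARD('x) * CARD('y)"
    "card ({..<K} \<times> (UNIV :: ('x \<times> 'y) set)) \<le> (K + 1) * CARD('x) * CARD('y)"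
    by (simp_all add: card_cartesian_product mult.assoc)
  have "K + 1 \<le> (K + 1) * CARD('x)"
    using mult_le_mono2[OF x, of "K + 1"] by simp
  then show "card ({..<K} \<times> (UNIV :: 'y set)) \<le> (K + 1) * CARD('x) * CARD('y)"
    by (simp add: card_cartesian_product)
qed

lemma abs_wak_objective_diff_le:
  fixes P P' :: "'x::finite \<times> 'y::finite \<Rightarrow> real" and d e :: real
  assumes P: "is_dist P" and P': "is_dist P'" and V: "cond_dist K V" and mu: "0 \<le> mu"
    and D: "(\<Sum>a\<in>UNIV. \<bar>P' a - P a\<bar>) < d"
    and uc: "\<And>s t. s \<in> {0..1} \<Longrightarrow> t \<in> {0..1} \<Longrightarrow> \<bar>s - t\<bar> < d \<Longrightarrow> \<bar>eta s - eta t\<bar> < e"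
  shows "\<bar>wak_objective K mu P' V - wak_objective K mu P V\<bar>
    \<le> (3 + 2 * mu) * real ((K + 1) * CARD('x) * CARD('y)) * e"
proof -
  define N where "N = real ((K + 1) * CARD('x) * CARD('y))"
  have card_le_N: "real (card {..<K}) \<le> N" "real (card (UNIV :: ('x \<times> 'y) set)) \<le> N"
    "real (card ({..<K} \<times> (UNIV :: ('x \<times> 'y) set))) \<le> N" "real (card ({..<K} \<times> (UNIV :: 'y set))) \<le> N"
    unfolding N_def of_nat_le_iff by (fact card_entropy_index_sets_le)+
  have "0 \<le> (\<Sum>a\<in>UNIV. \<bar>P' a - P a\<bar>)"
    by (simp add: sum_nonneg)
  with D have "0 < d"
    by linarith
  then have e: "0 \<le> e"
    using uc[of 0 0] by simp
  note U = cond_dist_bounds[OF V]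
  have "\<bar>H_W K P' V - H_W K P V\<bar> \<le> real (card {..<K}) * e"
    unfolding entropies_as_linear_images by (intro ent_linear_image_close[OF P P' _ D uc]) (simp add: U)
  then have W: "\<bar>H_W K P' V - H_W K P V\<bar> \<le> N * e"
    using mult_right_mono[OF card_le_N(1) e] by linarith
  have "\<bar>H_XY P' - H_XY P\<bar> \<le> real (card (UNIV :: ('x \<times> 'y) set)) * e"
    unfolding entropies_as_linear_images by (intro ent_linear_image_close[OF P P' _ D uc]) simp
  then have XY: "\<bar>H_XY P' - H_XY P\<bar> \<le> N * e"
    using mult_right_mono[OF card_le_N(2) e] by linarith
  have "\<bar>H_WXY K P' V - H_WXY K P V\<bar> \<le> real (card ({..<K} \<times> (UNIV :: ('x \<times> 'y) set))) * e"
    unfolding entropies_as_linear_images by (intro ent_linear_image_close[OF P P' _ D uc]) (auto simp: U)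
  then have WXY: "\<bar>H_WXY K P' V - H_WXY K P V\<bar> \<le> N * e"
    using mult_right_mono[OF card_le_N(3) e] by linarith
  have "\<bar>H_WY K P' V - H_WY K P V\<bar> \<le> real (card ({..<K} \<times> (UNIV :: 'y set))) * e"
    unfolding entropies_as_linear_images by (intro ent_linear_image_close[OF P P' _ D uc]) (auto simp: U)
  then have WY: "\<bar>H_WY K P' V - H_WY K P V\<bar> \<le> N * e"
    using mult_right_mono[OF card_le_N(4) e] by linarith
  have "\<bar>mu * ((H_WY K P' V - H_WY K P V) - (H_W K P' V - H_W K P V))\<bar> \<le> mu * (2 * (N * e))"
    using W WY mu by (simp add: abs_mult mult_left_mono)
  then show ?thesis
    using W XY WXY unfolding wak_objective_def MI_W_XY_def CH_Y_W_def N_def[symmetric]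
    by (simp add: algebra_simps abs_le_iff)
qed

lemma wak_objective_equicontinuous:
  fixes mu e :: real
  assumes mu: "0 \<le> mu" and e: "0 < e"
  obtains d where "0 < d"
    and "\<And>(P :: 'x::finite \<times> 'y::finite \<Rightarrow> real) P' V. is_dist P \<Longrightarrow> is_dist P' \<Longrightarrow> cond_dist K V \<Longrightarrow>
      (\<Sum>a\<in>UNIV. \<bar>P' a - P a\<bar>) < d \<Longrightarrow> \<bar>wak_objective K mu P' V - wak_objective K mu P V\<bar> \<le> e"
proof -
  define c where "c = (3 + 2 * mu) * real ((K + 1) * CARD('x) * CARD('y))"
  have "0 < real ((K + 1) * CARD('x) * CARD('y))"
    unfolding of_nat_0_less_iff by simp
  then have c: "0 < c"
    unfolding c_def by (rule mult_pos_pos[rotated]) (use mu in simp)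
  obtain d where "0 < d"
    and uc: "\<And>s t. s \<in> {0..1} \<Longrightarrow> t \<in> {0..1} \<Longrightarrow> \<bar>s - t\<bar> < d \<Longrightarrow> \<bar>eta s - eta t\<bar> < e / c"
    using eta_uniformly_continuous[of "e / c"] e c by auto
  show thesis
  proof (rule that[OF \<open>0 < d\<close>])
    fix P P' :: "'x \<times> 'y \<Rightarrow> real" and V :: "nat \<Rightarrow> 'x \<times> 'y \<Rightarrow> real"
    assume "is_dist P" "is_dist P'" "cond_dist K V" "(\<Sum>a\<in>UNIV. \<bar>P' a - P a\<bar>) < d"
    from abs_wak_objective_diff_le[OF this(1-3) mu this(4) uc]
    have "\<bar>wak_objective K mu P' V - wak_objective K mu P V\<bar> \<le> c * (e / c)"
      unfolding c_def .
    then show "\<bar>wak_objective K mu P' V - wak_objective K mu P V\<bar> \<le> e"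
      using c by simp
  qed
qed

lemma cInf_eq_if_cofinal_subset:
  fixes F S :: "'a::conditionally_complete_lattice set"
  assumes "F \<subseteq> S" "F \<noteq> {}" "bdd_below F" "\<And>s. s \<in> S \<Longrightarrow> \<exists>f\<in>F. f \<le> s"
  shows "Inf S = Inf F"
proof (rule antisym)
  have "bdd_below S"
    using assms(3,4) unfolding bdd_below_def by (meson order_trans)
  then show "Inf S \<le> Inf F"
    using assms(1,2) by (rule cInf_superset_mono[rotated])
  show "Inf F \<le> Inf S"
  proof (rule cInf_greatest)
    show "S \<noteq> {}"
      using assms(1,2) by blast
  next
    fix s assume "s \<in> S"
    then obtain f where "f \<in> F" "f \<le> s"
      using assms(4) by blast
    then show "Inf F \<le> s"
      using cInf_lower[OF _ assms(3)] order_trans by blast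
  qed
qed

lemma abs_cInf_image_diff_le:
  fixes f g :: "'a \<Rightarrow> real"
  assumes "A \<noteq> {}" "bdd_below (f ` A)" "bdd_below (g ` A)"
    and "\<And>a. a \<in> A \<Longrightarrow> \<bar>f a - g a\<bar> \<le> c"
  shows "\<bar>Inf (f ` A) - Inf (g ` A)\<bar> \<le> c"
proof -
  have "Inf (f ` A) - c \<le> Inf (g ` A)"
  proof (rule cInf_greatest)
    fix t assume "t \<in> g ` A"
    then obtain a where "a \<in> A" "t = g a" by blast
    then show "Inf (f ` A) - c \<le> t"
      using cInf_lower[OF imageI[of a A f] assms(2)] assms(4)[of a] by linarith
  qed (use assms(1) in simp)
  moreover have "Inf (g ` A) - c \<le> Inf (f ` A)"
  proof (rule cInf_greatest)
    fix t assume "t \<in> f ` A"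
    then obtain a where "a \<in> A" "t = f a" by blast
    then show "Inf (g ` A) - c \<le> t"
      using cInf_lower[OF imageI[of a A g] assms(3)] assms(4)[of a] by linarith
  qed (use assms(1) in simp)
  ultimately show ?thesis
    by linarith
qed

lemma WAK_region_if_x_only_channel:
  fixes P :: "'x::finite \<times> 'y::finite \<Rightarrow> real"
  assumes P: "is_dist P" and V: "x_only_channel (wak_card TYPE('x \<times> 'y)) V"
  shows "(MI_W_XY (wak_card TYPE('x \<times> 'y)) P V, CH_Y_W (wak_card TYPE('x \<times> 'y)) P V) \<in> WAK_region P"
proof -
  have P_nonneg: "\<forall>a. 0 \<le> P a" and V_cond: "cond_dist (wak_card TYPE('x \<times> 'y)) V"
    using P V by (simp_all add: is_dist_def x_only_channel_def)
  then have "CMI_W_Y_X (wak_card TYPE('x \<times> 'y)) P V = 0"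
    using V by (intro CMI_W_Y_X_eq_0_if_markov_chain markov_chain_if_x_only_channel)
  then show ?thesis
    unfolding WAK_region_def using V_cond by auto
qed

lemma WAK_region_dominated_by_x_only_channel:
  fixes P :: "'x::finite \<times> 'y::finite \<Rightarrow> real"
  assumes P: "is_dist P" and mu: "0 \<le> mu" and r: "(r0, r2) \<in> WAK_region P"
  obtains V' where "x_only_channel (wak_card TYPE('x \<times> 'y)) V'"
    and "wak_objective (wak_card TYPE('x \<times> 'y)) mu P V' \<le> r0 + mu * r2"
proof -
  let ?K = "wak_card TYPE('x \<times> 'y)"
  have P_nonneg: "\<forall>a. 0 \<le> P a"
    using P by (simp add: is_dist_def)
  obtain V where V: "cond_dist ?K V" and r0: "MI_W_XY ?K P V \<le> r0" and r2: "CH_Y_W ?K P V \<le> r2"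
    and C: "CMI_W_Y_X ?K P V = 0"
    using r unfolding WAK_region_def by blast
  have K: "0 < ?K"
    by (simp add: wak_card_def)
  obtain V' where V': "x_only_channel ?K V'"
    and same: "\<And>w a. w < ?K \<Longrightarrow> jWXY P V' (w, a) = jWXY P V (w, a)"
    using x_only_channel_of_markov_chain[OF P_nonneg V markov_chain_if_CMI_W_Y_X_eq_0[OF P_nonneg V C] K]
    by blast
  have "wak_objective ?K mu P V' = wak_objective ?K mu P V"
    using same by (rule wak_objective_cong)
  also have "\<dots> \<le> r0 + mu * r2"
    unfolding wak_objective_def using r0 mult_left_mono[OF r2 mu] by simp
  finally show thesis
    using V' that by blast
qed

lemma R_mu_eq_Inf_x_only_channel:
  fixes P :: "'x::finite \<times> 'y::finite \<Rightarrow> real"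
  assumes P: "is_dist P" and mu: "0 \<le> mu"
  shows "R_mu mu P = Inf (wak_objective (wak_card TYPE('x \<times> 'y)) mu P `
                           {V. x_only_channel (wak_card TYPE('x \<times> 'y)) V})"
  unfolding R_mu_def
proof (rule cInf_eq_if_cofinal_subset)
  let ?F = "wak_objective (wak_card TYPE('x \<times> 'y)) mu P ` {V. x_only_channel (wak_card TYPE('x \<times> 'y)) V}"
  show "?F \<subseteq> {r0 + mu * r2 |r0 r2. (r0, r2) \<in> WAK_region P}"
    using WAK_region_if_x_only_channel[OF P] unfolding wak_objective_def by blast
  show "?F \<noteq> {}"
    using x_only_channel_const[of "wak_card TYPE('x \<times> 'y)"] by (auto simp: wak_card_def)
  show "bdd_below ?F"
    by (rule bdd_below_mono[OF bdd_below_wak_objective[OF P mu]]) (auto simp: x_only_channel_def)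
  show "\<exists>f\<in>?F. f \<le> s" if "s \<in> {r0 + mu * r2 |r0 r2. (r0, r2) \<in> WAK_region P}" for s
    using that WAK_region_dominated_by_x_only_channel[OF P mu] by blast
qed

theorem lemma4:
  fixes mu :: real
  assumes "mu \<ge> 0"
  shows "\<forall>P :: 'x::finite \<times> 'y::finite \<Rightarrow> real. is_dist P \<longrightarrow>
           (\<forall>e>0. \<exists>d>0. \<forall>P'. is_dist P' \<and> (\<Sum>a\<in>UNIV. \<bar>P' a - P a\<bar>) < d \<longrightarrow>
              \<bar>R_mu mu P' - R_mu mu P\<bar> < e)"
proof (intro allI impI)
  fix P :: "'x \<times> 'y \<Rightarrow> real" and e :: real
  assume P: "is_dist P" and e: "0 < e"
  let ?K = "wak_card TYPE('x \<times> 'y)"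
  let ?C = "{V. x_only_channel ?K V}"
  obtain d where d: "0 < d"
    and close: "\<And>(P :: 'x \<times> 'y \<Rightarrow> real) P' V. is_dist P \<Longrightarrow> is_dist P' \<Longrightarrow> cond_dist ?K V \<Longrightarrow>
      (\<Sum>a\<in>UNIV. \<bar>P' a - P a\<bar>) < d \<Longrightarrow>
      \<bar>wak_objective ?K mu P' V - wak_objective ?K mu P V\<bar> \<le> e / 2"
    using wak_objective_equicontinuous[OF assms, of "e / 2"] e by auto
  have "\<bar>R_mu mu P' - R_mu mu P\<bar> \<le> e / 2"
    if P': "is_dist P'" and D: "(\<Sum>a\<in>UNIV. \<bar>P' a - P a\<bar>) < d" for P'
    unfolding R_mu_eq_Inf_x_only_channel[OF P' assms] R_mu_eq_Inf_x_only_channel[OF P assms]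
  proof (rule abs_cInf_image_diff_le)
    show "?C \<noteq> {}"
      using x_only_channel_const[of ?K] by (auto simp: wak_card_def)
    show "bdd_below (wak_objective ?K mu P' ` ?C)" "bdd_below (wak_objective ?K mu P ` ?C)"
      by (rule bdd_below_mono[OF bdd_below_wak_objective[OF _ assms]]; auto simp: x_only_channel_def P P')+
    show "\<bar>wak_objective ?K mu P' V - wak_objective ?K mu P V\<bar> \<le> e / 2" if "V \<in> ?C" for V
      using close[OF P P' _ D] that by (simp add: x_only_channel_def)
  qed
  then show "\<exists>d>0. \<forall>P'. is_dist P' \<and> (\<Sum>a\<in>UNIV. \<bar>P' a - P a\<bar>) < d \<longrightarrow>
      \<bar>R_mu mu P' - R_mu mu P\<bar> < e"
    using d e by (intro exI[of _ d]) force
qed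

end
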